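(* Let $T=(p,q:F\to E)$ be an LR textile system with $p$ surjective and $F$ source-free, $\Lambda=\Lambda_T$, and let $\{\mathcal G^i_z: z\in E^0, 1\le i\le m(z)\}$ be a 2-graph insplitting partition of $\Lambda$. Define $\mathcal F^i_v=\{\lambda\in F^1: r(\lambda)=v,\ p(\lambda)\in\mathcal G^i_{p(v)}\}$ for $v\in F^0$, $1\le i\le m(p(v))$, and $\mathcal E^i_z=\mathcal G^i_z\cap zE^1$. Then: (1a) if $v,w\in F^0$ and $p(\mathcal F^i_v)\cap p(\mathcal F^j_w)\neq\emptyset$ then $p(\mathcal F^i_v)=p(\mathcal F^j_w)$; (1b) for each $v\in F^0$ there are $w\in F^0$ and $j$ with $q(vF^1)\subseteq p(\mathcal F^j_w)$; (2) $\mathcal E^i_z=p(\mathcal F^i_v)$ for every $v\in F^0$ with $p(v)=z$; (3) $\mathcal G^i_z=\mathcal E^i_z\sqcup r_F(q^{-1}(\mathcal E^i_z))$ for all $z\in E^0$ and $1\le i\le m(z)$.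
   Context: Directed graph $E=(E^0,E^1,r,s)$, $zE^1=r^{-1}(z)$; $F$ source-free: $r$ onto $F^0$. Textile system $T=(p,q:F\to E)$: graph homomorphisms (commuting with $r,s$) with $f\mapsto(r(f),p(f),s(f),q(f))$ injective. LR: $p$ has unique $r$-path lifting (for $v\in F^0,e\in E^1$ with $p(v)=r(e)$, exactly one $f\in F^1$ with $r(f)=v,p(f)=e$), $q$ has unique $s$-path lifting (same with $s$). $\Lambda_T$ is the 2-graph with vertices $E^0$, color-1 edges $E^1$ (range/source from $E$), color-2 edges $F^0$ with $r(w)=q(w)$, $s(w)=p(w)$, and commuting squares $ve\sim e'w$ iff some $f\in F^1$ has $r(f)=v,s(f)=w,p(f)=e,q(f)=e'$; $\Lambda^1=E^1\sqcup F^0$. A 2-graph insplitting partition: for each $z\in E^0$, a partition of the edges of $\Lambda^1$ with range $z$ into nonempty sets $\mathcal G^1_z,\dots,\mathcal G^{m(z)}_z$ with the pairing condition: for each $f\in F^1$ (a commuting square $r(f)p(f)\sim q(f)s(f)$), the edges $r(f)$ and $q(f)$ lie in the same set $\mathcal G^j_{q(r(f))}$. *)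

theory Defs
  imports Main
begin

record ('v, 'e) dgraph =
  verts :: "'v set"
  edges :: "'e set"
  rg :: "'e \<Rightarrow> 'v"
  sg :: "'e \<Rightarrow> 'v"

definition wf_graph :: "('v, 'e) dgraph \<Rightarrow> bool" where
  "wf_graph G \<longleftrightarrow> (\<forall>e\<in>edges G. rg G e \<in> verts G \<and> sg G e \<in> verts G)"

definition source_free :: "('v, 'e) dgraph \<Rightarrow> bool" where
  "source_free G \<longleftrightarrow> rg G ` edges G = verts G"

definition graph_hom ::
  "('a, 'b) dgraph \<Rightarrow> ('v, 'e) dgraph \<Rightarrow> ('a \<Rightarrow> 'v) \<Rightarrow> ('b \<Rightarrow> 'e) \<Rightarrow> bool" where
  "graph_hom F E h0 h1 \<longleftrightarrow>
     (\<forall>v\<in>verts F. h0 v \<in> verts E) \<and> (\<forall>f\<in>edges F. h1 f \<in> edges E) \<and>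
     (\<forall>f\<in>edges F. rg E (h1 f) = h0 (rg F f) \<and> sg E (h1 f) = h0 (sg F f))"

definition surj_graph_hom ::
  "('a, 'b) dgraph \<Rightarrow> ('v, 'e) dgraph \<Rightarrow> ('a \<Rightarrow> 'v) \<Rightarrow> ('b \<Rightarrow> 'e) \<Rightarrow> bool" where
  "surj_graph_hom F E h0 h1 \<longleftrightarrow> h0 ` verts F = verts E \<and> h1 ` edges F = edges E"

definition textile_system ::
  "('v, 'e) dgraph \<Rightarrow> ('a, 'b) dgraph \<Rightarrow> ('a \<Rightarrow> 'v) \<Rightarrow> ('b \<Rightarrow> 'e) \<Rightarrow>
   ('a \<Rightarrow> 'v) \<Rightarrow> ('b \<Rightarrow> 'e) \<Rightarrow> bool" where
  "textile_system E F p0 p1 q0 q1 \<longleftrightarrow>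
     wf_graph E \<and> wf_graph F \<and> graph_hom F E p0 p1 \<and> graph_hom F E q0 q1 \<and>
     inj_on (\<lambda>f. (rg F f, p1 f, sg F f, q1 f)) (edges F)"

definition LR_textile ::
  "('v, 'e) dgraph \<Rightarrow> ('a, 'b) dgraph \<Rightarrow> ('a \<Rightarrow> 'v) \<Rightarrow> ('b \<Rightarrow> 'e) \<Rightarrow>
   ('a \<Rightarrow> 'v) \<Rightarrow> ('b \<Rightarrow> 'e) \<Rightarrow> bool" where
  "LR_textile E F p0 p1 q0 q1 \<longleftrightarrow>
     textile_system E F p0 p1 q0 q1 \<and>
     (\<forall>v\<in>verts F. \<forall>e\<in>edges E. p0 v = rg E e \<longrightarrow>
        (\<exists>!f. f \<in> edges F \<and> rg F f = v \<and> p1 f = e)) \<and>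
     (\<forall>v\<in>verts F. \<forall>e\<in>edges E. q0 v = sg E e \<longrightarrow>
        (\<exists>!f. f \<in> edges F \<and> sg F f = v \<and> q1 f = e))"

text \<open>Edges of \<Lambda>_T^1 = E^1 \<squnion> F^0 (as the sum type, Inl for colour 1, Inr for colour 2)
  with range z; colour-2 edge w has range q(w).\<close>
definition lam_edges_at ::
  "('v, 'e) dgraph \<Rightarrow> ('a, 'b) dgraph \<Rightarrow> ('a \<Rightarrow> 'v) \<Rightarrow> 'v \<Rightarrow> ('e + 'a) set" where
  "lam_edges_at E F q0 z =
     Inl ` {e \<in> edges E. rg E e = z} \<union> Inr ` {w \<in> verts F. q0 w = z}"

definition insplitting_partition ::
  "('v, 'e) dgraph \<Rightarrow> ('a, 'b) dgraph \<Rightarrow> ('b \<Rightarrow> 'e) \<Rightarrow> ('a \<Rightarrow> 'v) \<Rightarrow> ('b \<Rightarrow> 'e) \<Rightarrow>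
   ('v \<Rightarrow> nat) \<Rightarrow> ('v \<Rightarrow> nat \<Rightarrow> ('e + 'a) set) \<Rightarrow> bool" where
  "insplitting_partition E F p1 q0 q1 m G \<longleftrightarrow>
     (\<forall>z\<in>verts E.
        (\<forall>i\<in>{1..m z}. G z i \<noteq> {} \<and> G z i \<subseteq> lam_edges_at E F q0 z) \<and>
        (\<forall>i\<in>{1..m z}. \<forall>j\<in>{1..m z}. i \<noteq> j \<longrightarrow> G z i \<inter> G z j = {}) \<and>
        (\<Union>i\<in>{1..m z}. G z i) = lam_edges_at E F q0 z) \<and>
     (\<forall>f\<in>edges F. \<exists>j\<in>{1..m (q0 (rg F f))}.
        Inr (rg F f) \<in> G (q0 (rg F f)) j \<and> Inl (q1 f) \<in> G (q0 (rg F f)) j)"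

definition FF ::
  "('a, 'b) dgraph \<Rightarrow> ('a \<Rightarrow> 'v) \<Rightarrow> ('b \<Rightarrow> 'e) \<Rightarrow> ('v \<Rightarrow> nat \<Rightarrow> ('e + 'a) set) \<Rightarrow>
   'a \<Rightarrow> nat \<Rightarrow> 'b set" where
  "FF F p0 p1 G v i = {l \<in> edges F. rg F l = v \<and> Inl (p1 l) \<in> G (p0 v) i}"

definition EE ::
  "('v, 'e) dgraph \<Rightarrow> ('v \<Rightarrow> nat \<Rightarrow> ('e + 'a) set) \<Rightarrow> 'v \<Rightarrow> nat \<Rightarrow> 'e set" where
  "EE E G z i = {e \<in> edges E. rg E e = z \<and> Inl e \<in> G z i}"

end

theory Submission
  imports Defs
begin

text \<open>The colour-2 edge \<open>r(f)\<close> and the colour-1 edge \<open>q(f)\<close> of every square \<open>f\<close> lie in the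
  same part, so by disjointness of the parts each part is the union of its colour-1 edges and the
  ranges of the squares whose \<open>q\<close>-edge it contains; source-freeness makes every colour-2 edge
  occur as such a range. Unique \<open>r\<close>-lifting along \<open>p\<close> identifies \<open>p(\<F>\<^sup>i\<^sub>v)\<close> with \<open>\<E>\<^sup>i\<^sub>z\<close>,
  which reduces the statements about the sets \<open>p(\<F>\<^sup>i\<^sub>v)\<close> to statements about the partition.\<close>

lemma textile_system_q_edge:
  assumes "textile_system E F p0 p1 q0 q1" and "f \<in> edges F"
  shows "q1 f \<in> edges E" and "rg E (q1 f) = q0 (rg F f)" and "q0 (rg F f) \<in> verts E"
  using assms unfolding textile_system_def graph_hom_def wf_graph_def by auto

lemma source_freeE:
  assumes "source_free F" and "v \<in> verts F"
  obtains f where "f \<in> edges F" and "rg F f = v"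
  using assms unfolding source_free_def by (metis imageE)

lemma image_FF_eq_EE:
  assumes LR: "LR_textile E F p0 p1 q0 q1" and v: "v \<in> verts F"
  shows "p1 ` FF F p0 p1 G v i = EE E G (p0 v) i"
proof
  have "graph_hom F E p0 p1"
    using LR unfolding LR_textile_def textile_system_def by blast
  then show "p1 ` FF F p0 p1 G v i \<subseteq> EE E G (p0 v) i"
    unfolding FF_def EE_def graph_hom_def by auto
next
  show "EE E G (p0 v) i \<subseteq> p1 ` FF F p0 p1 G v i"
  proof
    fix e assume "e \<in> EE E G (p0 v) i"
    then have e: "e \<in> edges E" "p0 v = rg E e" "Inl e \<in> G (p0 v) i"
      unfolding EE_def by auto
    then obtain f where "f \<in> edges F" "rg F f = v" "p1 f = e"
      using LR v unfolding LR_textile_def by metis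
    with e show "e \<in> p1 ` FF F p0 p1 G v i"
      unfolding FF_def by auto
  qed
qed

lemma insplitting_partition_index_unique:
  assumes "insplitting_partition E F p1 q0 q1 m G" and "z \<in> verts E"
    and "i \<in> {1..m z}" and "j \<in> {1..m z}" and "x \<in> G z i" and "x \<in> G z j"
  shows "i = j"
  using assms unfolding insplitting_partition_def by blast

lemma insplitting_partition_pairing:
  assumes "insplitting_partition E F p1 q0 q1 m G" and "f \<in> edges F"
  obtains j where "j \<in> {1..m (q0 (rg F f))}"
    and "Inr (rg F f) \<in> G (q0 (rg F f)) j" and "Inl (q1 f) \<in> G (q0 (rg F f)) j"
  using assms unfolding insplitting_partition_def by blast

lemma EE_overlap:
  assumes "insplitting_partition E F p1 q0 q1 m G" and "z \<in> verts E"
    and "i \<in> {1..m z}" and "j \<in> {1..m z'}" and "EE E G z i \<inter> EE E G z' j \<noteq> {}"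
  shows "z = z'" and "i = j"
proof -
  obtain e where "e \<in> EE E G z i" "e \<in> EE E G z' j"
    using assms(5) by blast
  then have "z' = z" and "Inl e \<in> G z i" "Inl e \<in> G z j"
    unfolding EE_def by auto
  with assms(4) show "z = z'" and "i = j"
    using insplitting_partition_index_unique[OF assms(1-3)] by auto
qed

lemma insplitting_partition_Inr_iff:
  assumes ts: "textile_system E F p0 p1 q0 q1"
    and part: "insplitting_partition E F p1 q0 q1 m G"
    and f: "f \<in> edges F" and i: "i \<in> {1..m (q0 (rg F f))}"
  shows "Inr (rg F f) \<in> G (q0 (rg F f)) i \<longleftrightarrow> q1 f \<in> EE E G (q0 (rg F f)) i"
proof -
  let ?z = "q0 (rg F f)"
  obtain j where j: "j \<in> {1..m ?z}" "Inr (rg F f) \<in> G ?z j" "Inl (q1 f) \<in> G ?z j"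
    using insplitting_partition_pairing[OF part f] .
  have ij: "i = j" if "x \<in> G ?z i" "x \<in> G ?z j" for x
    using insplitting_partition_index_unique[OF part textile_system_q_edge(3)[OF ts f] i j(1)] that .
  have "Inr (rg F f) \<in> G ?z i \<longleftrightarrow> Inl (q1 f) \<in> G ?z i"
    using ij j(2,3) by metis
  also have "\<dots> \<longleftrightarrow> q1 f \<in> EE E G ?z i"
    using textile_system_q_edge[OF ts f] unfolding EE_def by auto
  finally show ?thesis .
qed

lemma q_image_edges_at_subset_EE:
  assumes ts: "textile_system E F p0 p1 q0 q1"
    and sf: "source_free F"
    and part: "insplitting_partition E F p1 q0 q1 m G"
    and v: "v \<in> verts F"
  shows "\<exists>j\<in>{1..m (q0 v)}. q1 ` {f \<in> edges F. rg F f = v} \<subseteq> EE E G (q0 v) j"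
proof -
  obtain f0 where f0: "f0 \<in> edges F" "rg F f0 = v"
    using source_freeE[OF sf v] .
  obtain j where j: "j \<in> {1..m (q0 v)}" "Inr v \<in> G (q0 v) j"
    using insplitting_partition_pairing[OF part f0(1)] unfolding f0(2) .
  have "q1 f \<in> EE E G (q0 v) j" if "f \<in> edges F" "rg F f = v" for f
    using insplitting_partition_Inr_iff[OF ts part that(1)] j unfolding that(2) by blast
  with j(1) show ?thesis by blast
qed

lemma insplitting_partition_part_eq:
  assumes ts: "textile_system E F p0 p1 q0 q1"
    and sf: "source_free F"
    and part: "insplitting_partition E F p1 q0 q1 m G"
    and z: "z \<in> verts E" and i: "i \<in> {1..m z}"
  shows "G z i = Inl ` EE E G z i \<union> Inr ` (rg F ` {f \<in> edges F. q1 f \<in> EE E G z i})"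
proof (intro equalityI subsetI)
  fix x assume x: "x \<in> G z i"
  have "x \<in> lam_edges_at E F q0 z"
    using part z i x unfolding insplitting_partition_def by blast
  then consider e where "x = Inl e" "e \<in> edges E" "rg E e = z"
    | w where "x = Inr w" "w \<in> verts F" "q0 w = z"
    unfolding lam_edges_at_def by blast
  then show "x \<in> Inl ` EE E G z i \<union> Inr ` (rg F ` {f \<in> edges F. q1 f \<in> EE E G z i})"
  proof cases
    case 1
    with x show ?thesis unfolding EE_def by auto
  next
    case (2 w)
    obtain f where f: "f \<in> edges F" "rg F f = w"
      using source_freeE[OF sf 2(2)] .
    then have "q1 f \<in> EE E G z i"
      using insplitting_partition_Inr_iff[OF ts part f(1)] 2 x i by simp
    with f 2(1) show ?thesis by blast
  qed
next
  fix x assume "x \<in> Inl ` EE E G z i \<union> Inr ` (rg F ` {f \<in> edges F. q1 f \<in> EE E G z i})"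
  then consider "x \<in> Inl ` EE E G z i"
    | f where "x = Inr (rg F f)" "f \<in> edges F" "q1 f \<in> EE E G z i"
    by blast
  then show "x \<in> G z i"
  proof cases
    case 1
    then show ?thesis unfolding EE_def by auto
  next
    case 2
    then have "q0 (rg F f) = z"
      using textile_system_q_edge(2)[OF ts 2(2)] unfolding EE_def by auto
    with 2 i show ?thesis
      using insplitting_partition_Inr_iff[OF ts part 2(2)] by simp
  qed
qed

lemma image_FF_overlap_imp_eq:
  assumes LR: "LR_textile E F p0 p1 q0 q1"
    and part: "insplitting_partition E F p1 q0 q1 m G"
    and v: "v \<in> verts F" and w: "w \<in> verts F"
    and i: "i \<in> {1..m (p0 v)}" and j: "j \<in> {1..m (p0 w)}"
    and overlap: "p1 ` FF F p0 p1 G v i \<inter> p1 ` FF F p0 p1 G w j \<noteq> {}"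
  shows "p1 ` FF F p0 p1 G v i = p1 ` FF F p0 p1 G w j"
proof -
  have "p0 v \<in> verts E"
    using LR v unfolding LR_textile_def textile_system_def graph_hom_def by blast
  moreover have "EE E G (p0 v) i \<inter> EE E G (p0 w) j \<noteq> {}"
    using overlap unfolding image_FF_eq_EE[OF LR v] image_FF_eq_EE[OF LR w] .
  ultimately have "p0 v = p0 w" "i = j"
    using EE_overlap[OF part _ i j] by blast+
  then show ?thesis
    unfolding image_FF_eq_EE[OF LR v] image_FF_eq_EE[OF LR w] by simp
qed

lemma q_image_edges_at_subset_image_FF:
  assumes LR: "LR_textile E F p0 p1 q0 q1"
    and p0_onto: "p0 ` verts F = verts E"
    and sf: "source_free F"
    and part: "insplitting_partition E F p1 q0 q1 m G"
    and v: "v \<in> verts F"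
  shows "\<exists>w\<in>verts F. \<exists>j\<in>{1..m (p0 w)}.
    q1 ` {f \<in> edges F. rg F f = v} \<subseteq> p1 ` FF F p0 p1 G w j"
proof -
  have ts: "textile_system E F p0 p1 q0 q1"
    using LR unfolding LR_textile_def by blast
  then have "q0 v \<in> verts E"
    using v unfolding textile_system_def graph_hom_def by blast
  then obtain w where w: "w \<in> verts F" "p0 w = q0 v"
    using p0_onto by (metis imageE)
  obtain j where "j \<in> {1..m (q0 v)}" "q1 ` {f \<in> edges F. rg F f = v} \<subseteq> EE E G (q0 v) j"
    using q_image_edges_at_subset_EE[OF ts sf part v] by blast
  with w show ?thesis
    using image_FF_eq_EE[OF LR w(1)] by metis
qed

theorem theorem7p13:
  fixes E :: "('v, 'e) dgraph" and F :: "('a, 'b) dgraph"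
    and p0 q0 :: "'a \<Rightarrow> 'v" and p1 q1 :: "'b \<Rightarrow> 'e"
    and m :: "'v \<Rightarrow> nat" and G :: "'v \<Rightarrow> nat \<Rightarrow> ('e + 'a) set"
  assumes LR: "LR_textile E F p0 p1 q0 q1"
    and psurj: "surj_graph_hom F E p0 p1"
    and sf: "source_free F"
    and part: "insplitting_partition E F p1 q0 q1 m G"
  shows
    "(\<forall>v\<in>verts F. \<forall>w\<in>verts F. \<forall>i\<in>{1..m (p0 v)}. \<forall>j\<in>{1..m (p0 w)}.
        p1 ` FF F p0 p1 G v i \<inter> p1 ` FF F p0 p1 G w j \<noteq> {} \<longrightarrow>
        p1 ` FF F p0 p1 G v i = p1 ` FF F p0 p1 G w j)
   \<and> (\<forall>v\<in>verts F. \<exists>w\<in>verts F. \<exists>j\<in>{1..m (p0 w)}.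
        q1 ` {f \<in> edges F. rg F f = v} \<subseteq> p1 ` FF F p0 p1 G w j)
   \<and> (\<forall>z\<in>verts E. \<forall>i\<in>{1..m z}. \<forall>v\<in>verts F. p0 v = z \<longrightarrow>
        EE E G z i = p1 ` FF F p0 p1 G v i)
   \<and> (\<forall>z\<in>verts E. \<forall>i\<in>{1..m z}.
        G z i = Inl ` EE E G z i \<union> Inr ` (rg F ` {f \<in> edges F. q1 f \<in> EE E G z i}))"
proof -
  have ts: "textile_system E F p0 p1 q0 q1"
    using LR unfolding LR_textile_def by blast
  have p0_onto: "p0 ` verts F = verts E"
    using psurj unfolding surj_graph_hom_def by blast
  show ?thesis
  proof (intro conjI ballI impI)
    show "p1 ` FF F p0 p1 G v i = p1 ` FF F p0 p1 G w j"
      if "v \<in> verts F" "w \<in> verts F" "i \<in> {1..m (p0 v)}" "j \<in> {1..m (p0 w)}"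
        and "p1 ` FF F p0 p1 G v i \<inter> p1 ` FF F p0 p1 G w j \<noteq> {}" for v w i j
      using image_FF_overlap_imp_eq[OF LR part that] .
    show "\<exists>w\<in>verts F. \<exists>j\<in>{1..m (p0 w)}.
        q1 ` {f \<in> edges F. rg F f = v} \<subseteq> p1 ` FF F p0 p1 G w j" if "v \<in> verts F" for v
      using q_image_edges_at_subset_image_FF[OF LR p0_onto sf part that] .
    show "EE E G z i = p1 ` FF F p0 p1 G v i" if "v \<in> verts F" "p0 v = z" for z i v
      using image_FF_eq_EE[OF LR that(1)] that(2) by simp
    show "G z i = Inl ` EE E G z i \<union> Inr ` (rg F ` {f \<in> edges F. q1 f \<in> EE E G z i})"
      if "z \<in> verts E" "i \<in> {1..m z}" for z i
      using insplitting_partition_part_eq[OF ts sf part that] .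
  qed
qed

end
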